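(* Let $d\ge2$ and let $g$ be the metric on $\mathbb R^d$ defined below. Let $y\in(0,1)^d$ be such that $\lim \frac{1}{\mathcal L^1(I)}\int_I|\theta-2|\,d\mathcal L^1=0$ as $I$ ranges over open intervals containing $y_1$ with $\mathcal L^1(I)\to0$. Then for every $u=(u_1,u')\in\mathbb R\times\mathbb R^{d-1}$, $\lim_{h\to0}\frac{\mathsf d_g(y,y+hu)}{|h|}=\alpha(u)$, where $\alpha(u)=|u_1|+|u'|$ if $|u_1|\le|u'|$ and $\alpha(u)=\sqrt2\,|u|$ otherwise (Euclidean norms).
   Context: Let $(q_i)_{i\ge1}$ be an enumeration of $\mathbb Q\cap(0,1)$, fix $\kappa\in(0,1/8)$, and set $O=\bigcup_{i\ge1}(q_i-\kappa2^{-i},q_i+\kappa2^{-i})$, $\theta=2-\mathbbm 1_O$ on $(0,1)$, and $g(x)=2\,\mathrm{Id}$ if $x\notin(0,1)^d$, $g(x)=\theta(x_1)\,\mathrm{Id}$ if $x\in(0,1)^d$. The distance is $\mathsf d_g(x,y)=\sup\{w(x)-w(y): w\text{ Lipschitz}, |\nabla_g w|_g\le1\text{ a.e.}\}$ (equal to the limit of the length distances of mollifications $\rho_\varepsilon*g$). *)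

theory Defs
  imports "HOL-Analysis.Analysis"
begin

text \<open>Points of R^d are represented as pairs (x1, x') in real \<times> real^'m, so d = 1 + CARD('m) \<ge> 2.
  The norm on this product type is the Euclidean norm.\<close>

definition O_set :: "(nat \<Rightarrow> real) \<Rightarrow> real \<Rightarrow> real set" where
  "O_set q \<kappa> = (\<Union>i\<in>{1..}. {q i - \<kappa> / 2 ^ i <..< q i + \<kappa> / 2 ^ i})"

definition theta :: "(nat \<Rightarrow> real) \<Rightarrow> real \<Rightarrow> real \<Rightarrow> real" where
  "theta q \<kappa> t = 2 - indicator (O_set q \<kappa>) t"

definition open_cube :: "(real \<times> (real ^ 'm)) set" where
  "open_cube = {x. 0 < fst x \<and> fst x < 1 \<and> (\<forall>i. 0 < snd x $ i \<and> snd x $ i < 1)}"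

text \<open>The metric g(x) = gfac(x) Id (conformal factor).\<close>
definition gfac :: "(nat \<Rightarrow> real) \<Rightarrow> real \<Rightarrow> real \<times> (real ^ 'm) \<Rightarrow> real" where
  "gfac q \<kappa> x = (if x \<in> open_cube then theta q \<kappa> (fst x) else 2)"

text \<open>w is admissible: Lipschitz, and |\<nabla>_g w|_g \<le> 1 a.e.; for g = c Id this means
  |\<nabla> w(x)| \<le> sqrt (c x), i.e. the differential D satisfies |D v| \<le> sqrt (c x) |v|.\<close>
definition admissible :: "(nat \<Rightarrow> real) \<Rightarrow> real \<Rightarrow> (real \<times> (real ^ 'm) \<Rightarrow> real) \<Rightarrow> bool" where
  "admissible q \<kappa> w \<longleftrightarrow> (\<exists>C. C-lipschitz_on UNIV w) \<and>
     (AE x in lebesgue. w differentiable (at x) \<and>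
        (\<forall>D. (w has_derivative D) (at x) \<longrightarrow> (\<forall>v. \<bar>D v\<bar> \<le> sqrt (gfac q \<kappa> x) * norm v)))"

definition dist_g :: "(nat \<Rightarrow> real) \<Rightarrow> real \<Rightarrow> real \<times> (real ^ 'm) \<Rightarrow> real \<times> (real ^ 'm) \<Rightarrow> real" where
  "dist_g q \<kappa> x y = Sup {w x - w y | w. admissible q \<kappa> w}"

definition alpha :: "real \<times> (real ^ 'm) \<Rightarrow> real" where
  "alpha u = (if \<bar>fst u\<bar> \<le> norm (snd u) then \<bar>fst u\<bar> + norm (snd u) else sqrt 2 * norm u)"

end

theory Submission
  imports Defs
begin

text \<open>
  Upper bound: an admissible function is \<open>sqrt 2\<close>-Lipschitz, and \<open>1\<close>-Lipschitz along segments in the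
  open set where \<open>theta = 1\<close>; both follow from a one-dimensional growth lemma for Lipschitz
  functions, applied on almost every parallel translate of the segment. As \<open>O_set\<close> is open and
  dense, a displacement \<open>v = (v1, v')\<close> splits into a diagonal part \<open>(v1, lambda v')\<close>, of cost \<open>sqrt 2\<close>
  times its length, and a vertical part \<open>(0, (1 - lambda) v')\<close> run inside \<open>O_set\<close> at unit cost, up
  to arbitrarily short horizontal detours; the best \<open>lambda\<close> gives \<open>alpha v\<close>.

  Lower bound: \<open>alpha v\<close> is the maximum of \<open>A |v1| + B |v'|\<close> over \<open>A\<^sup>2 + B\<^sup>2 \<le> 2\<close>, \<open>B \<le> 1\<close>. Replacing
  the first coordinate in such a linear form by the cumulative measure \<open>phi\<close> of \<open>[0,1] - O_set\<close>,
  whose derivative is almost everywhere \<open>0\<close>, or \<open>1\<close> off \<open>O_set\<close>, gives an admissible function. At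
  the assumed point \<open>y\<close> the set \<open>O_set\<close> has density zero, so \<open>phi' (fst y) = 1\<close> and this function
  is linear to first order at \<open>y\<close>.
\<close>

section \<open>Cumulative measure functions\<close>

definition cumulative_measure :: "real set \<Rightarrow> real \<Rightarrow> real" where
  "cumulative_measure S t = measure lebesgue (S \<inter> {..t})"

lemma cumulative_measure_diff:
  assumes S: "S \<in> lmeasurable" and "a \<le> b"
  shows "cumulative_measure S b - cumulative_measure S a = measure lebesgue (S \<inter> {a<..b})"
proof -
  have "S \<inter> {a<..b} = (S \<inter> {..b}) - (S \<inter> {..a})"
    using \<open>a \<le> b\<close> by auto
  moreover have "S \<inter> {..c} \<in> lmeasurable" for c
    using S by (simp add: fmeasurable_Int_fmeasurable)
  ultimately show ?thesis
    unfolding cumulative_measure_def using \<open>a \<le> b\<close>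
    by (metis Int_mono atMost_iff atMost_subset_iff fmeasurableD measurable_measure_Diff order_refl)
qed

lemma cumulative_measure_mono:
  "S \<in> lmeasurable \<Longrightarrow> a \<le> b \<Longrightarrow> cumulative_measure S a \<le> cumulative_measure S b"
  using cumulative_measure_diff[of S a b] measure_nonneg[of lebesgue "S \<inter> {a<..b}"] by linarith

lemma cumulative_measure_increment_le:
  assumes "S \<in> lmeasurable" "a \<le> b"
  shows "cumulative_measure S b - cumulative_measure S a \<le> b - a"
proof -
  have "measure lebesgue (S \<inter> {a<..b}) \<le> measure lebesgue {a..b}"
    using assms by (intro measure_mono_fmeasurable) (auto simp: fmeasurableD)
  then show ?thesis
    using assms by (simp add: cumulative_measure_diff)
qed

lemma lipschitz_cumulative_measure:
  assumes "S \<in> lmeasurable"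
  shows "1-lipschitz_on UNIV (cumulative_measure S)"
proof (rule lipschitz_onI)
  fix s t :: real
  show "dist (cumulative_measure S s) (cumulative_measure S t) \<le> 1 * dist s t"
    using cumulative_measure_mono[OF assms] cumulative_measure_increment_le[OF assms]
    by (cases s t rule: linorder_cases) (force simp: dist_real_def)+
qed simp

lemma lmeasurable_greaterThanAtMost [simp]: "{a<..b::real} \<in> lmeasurable"
  by (rule bounded_set_imp_lmeasurable) (auto intro: bounded_subset[of "{a..b}"])

lemma cumulative_measure_increment_eq:
  assumes S: "S \<in> lmeasurable" and "a \<le> b"
  shows "cumulative_measure S b - cumulative_measure S a = (b - a) - measure lebesgue ({a<..b} - S)"
proof -
  have "measure lebesgue ({a<..b} - S) = measure lebesgue {a<..b} - measure lebesgue (S \<inter> {a<..b})"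
  proof -
    have "{a<..b} - S = {a<..b} - S \<inter> {a<..b}"
      by blast
    then show ?thesis
      using S by (simp add: measurable_measure_Diff fmeasurableD fmeasurable_Int_fmeasurable Int_commute)
  qed
  then show ?thesis
    using cumulative_measure_diff[OF assms] \<open>a \<le> b\<close> by simp
qed

lemma cumulative_measure_linear_error_le:
  assumes S: "S \<in> lmeasurable"
  shows "\<bar>cumulative_measure S y - cumulative_measure S t - (y - t)\<bar> \<le> measure lebesgue (- S \<inter> cball t \<bar>y - t\<bar>)"
proof -
  define a b where "a = min y t" and "b = max y t"
  have "a \<le> b"
    by (simp add: a_def b_def)
  have "\<bar>cumulative_measure S y - cumulative_measure S t - (y - t)\<bar> = measure lebesgue ({a<..b} - S)"
  proof (cases "y \<le> t")
    case True
    then have "cumulative_measure S y - cumulative_measure S t - (y - t) = measure lebesgue ({a<..b} - S)"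
      using cumulative_measure_increment_eq[OF S True] by (simp add: a_def b_def)
    then show ?thesis
      by simp
  next
    case False
    then have "cumulative_measure S y - cumulative_measure S t - (y - t) = - measure lebesgue ({a<..b} - S)"
      using cumulative_measure_increment_eq[OF S, of t y] by (simp add: a_def b_def)
    then show ?thesis
      by simp
  qed
  also have "\<dots> \<le> measure lebesgue (- S \<inter> cball t \<bar>y - t\<bar>)"
  proof (rule measure_mono_fmeasurable)
    show "{a<..b} - S \<subseteq> - S \<inter> cball t \<bar>y - t\<bar>"
      by (auto simp: a_def b_def dist_real_def)
    show "{a<..b} - S \<in> sets lebesgue"
      using S by (simp add: fmeasurableD sets.Diff)
    show "- S \<inter> cball t \<bar>y - t\<bar> \<in> lmeasurable"
      using S fmeasurable_Int_fmeasurable[of "cball t \<bar>y - t\<bar>" lebesgue "- S"]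
      by (simp add: fmeasurableD Compl_in_sets_lebesgue Int_commute)
  qed
  finally show ?thesis .
qed

section \<open>Functions with almost everywhere bounded derivative\<close>

lemma negligible_imp_small_open_superset:
  fixes N :: "'a::euclidean_space set"
  assumes N: "negligible N" and e: "0 < e"
  obtains U where "open U" "N \<subseteq> U" "U \<in> lmeasurable" "measure lebesgue U \<le> e"
proof -
  obtain U where U: "open U" "N \<subseteq> U" "U - N \<in> lmeasurable" "emeasure lebesgue (U - N) < ennreal e"
    using sets_lebesgue_outer_open[OF negligible_imp_sets[OF N] e] by blast
  have "U = (U - N) \<union> N"
    using U(2) by blast
  then have Ul: "U \<in> lmeasurable"
    using U(3) negligible_imp_measurable[OF N] by (metis fmeasurable.Un)
  have "measure lebesgue U \<le> measure lebesgue (U - N) + measure lebesgue N"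
    using measure_Un_le[of "U - N" lebesgue N] U(3) N \<open>U = (U - N) \<union> N\<close>
    by (simp add: fmeasurableD negligible_imp_sets)
  also have "\<dots> \<le> e"
    using U(3,4) e negligible_imp_measure0[OF N] by (simp add: measure_def enn2real_leI less_imp_le)
  finally show thesis
    using that U(1,2) Ul by blast
qed

lemma lipschitz_increment_le_near:
  fixes f :: "real \<Rightarrow> real"
  assumes lip: "L-lipschitz_on UNIV f" and U: "open U" "U \<in> lmeasurable" and "0 \<le> M" "0 < e"
    and der: "x \<notin> U \<Longrightarrow> \<exists>D. (f has_real_derivative D) (at x) \<and> D \<le> M"
  obtains d where "0 < d" "\<And>s t. s \<le> x \<Longrightarrow> x \<le> t \<Longrightarrow> t - s < d \<Longrightarrow>
    f t - f s \<le> (M + e) * (t - s) + L * (cumulative_measure U t - cumulative_measure U s)"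
proof (cases "x \<in> U")
  case True
  then obtain d where d: "0 < d" "ball x d \<subseteq> U"
    using U(1) openE by blast
  \<comment> \<open>Inside \<open>U\<close> the cumulative measure of \<open>U\<close> grows at unit rate and absorbs the Lipschitz increment.\<close>
  show thesis
  proof (rule that[OF d(1)])
    fix s t
    assume st: "s \<le> x" "x \<le> t" "t - s < d"
    then have "{s<..t} \<subseteq> U"
      using d(2) by (force simp: dist_real_def)
    then have "cumulative_measure U t - cumulative_measure U s = t - s"
      using cumulative_measure_diff[OF U(2), of s t] st by (simp add: Int_absorb1)
    moreover have "f t - f s \<le> L * (t - s)"
      using lipschitz_onD[OF lip, of t s] st by (simp add: dist_real_def)
    moreover have "0 \<le> (M + e) * (t - s)"
      using \<open>0 \<le> M\<close> \<open>0 < e\<close> st by simp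
    ultimately show "f t - f s \<le> (M + e) * (t - s) + L * (cumulative_measure U t - cumulative_measure U s)"
      by simp
  qed
next
  case False
  then obtain D where D: "(f has_real_derivative D) (at x)" "D \<le> M"
    using der by blast
  obtain d where d: "0 < d" "\<And>y. \<bar>y - x\<bar> < d \<Longrightarrow> \<bar>f y - f x - D * (y - x)\<bar> \<le> e * \<bar>y - x\<bar>"
    using D(1) \<open>0 < e\<close> unfolding has_field_derivative_def has_derivative_at_alt by force
  show thesis
  proof (rule that[OF d(1)])
    fix s t
    assume st: "s \<le> x" "x \<le> t" "t - s < d"
    have "f t - f x \<le> (D + e) * (t - x)" "f x - f s \<le> (D + e) * (x - s)"
      using d(2)[of t] d(2)[of s] st by (auto simp: abs_le_iff algebra_simps)
    then have "f t - f s \<le> (D + e) * (t - s)"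
      by (simp add: algebra_simps)
    also have "\<dots> \<le> (M + e) * (t - s)"
      using D(2) st by (intro mult_right_mono) auto
    moreover have "0 \<le> L * (cumulative_measure U t - cumulative_measure U s)"
      using cumulative_measure_mono[OF U(2), of s t] lipschitz_on_nonneg[OF lip] st by simp
    ultimately show "f t - f s \<le> (M + e) * (t - s) + L * (cumulative_measure U t - cumulative_measure U s)"
      by linarith
  qed
qed

lemma lipschitz_increment_le_open_cover:
  fixes f :: "real \<Rightarrow> real"
  assumes lip: "L-lipschitz_on UNIV f" and U: "open U" "U \<in> lmeasurable"
    and "a \<le> b" "0 \<le> M" "0 < e"
    and der: "\<And>t. t \<in> {a..b} - U \<Longrightarrow> \<exists>D. (f has_real_derivative D) (at t) \<and> D \<le> M"
  shows "f b - f a \<le> (M + e) * (b - a) + L * measure lebesgue U"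
proof -
  define G where "G t = f t - (M + e) * t - L * cumulative_measure U t" for t
  have "G b \<le> G a"
    using \<open>a \<le> b\<close>
  proof (induction rule: Bolzano)
    case (trans r s t)
    then show ?case by linarith
  next
    case (local x)
    have "x \<notin> U \<Longrightarrow> \<exists>D. (f has_real_derivative D) (at x) \<and> D \<le> M"
      using der local by auto
    then obtain d where "0 < d" "\<And>s t. s \<le> x \<Longrightarrow> x \<le> t \<Longrightarrow> t - s < d \<Longrightarrow>
        f t - f s \<le> (M + e) * (t - s) + L * (cumulative_measure U t - cumulative_measure U s)"
      using lipschitz_increment_le_near[OF lip U \<open>0 \<le> M\<close> \<open>0 < e\<close>] by blast
    then show ?case
      unfolding G_def by (intro exI[of _ d]) (auto simp: algebra_simps)
  qed
  moreover have "cumulative_measure U b - cumulative_measure U a \<le> measure lebesgue U"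
    using cumulative_measure_diff[OF U(2) \<open>a \<le> b\<close>] U(2)
    by (simp add: measure_mono_fmeasurable fmeasurableD fmeasurable_Int_fmeasurable)
  then have "L * (cumulative_measure U b - cumulative_measure U a) \<le> L * measure lebesgue U"
    by (rule mult_left_mono[OF _ lipschitz_on_nonneg[OF lip]])
  ultimately show ?thesis
    unfolding G_def by (simp add: algebra_simps)
qed

lemma lipschitz_increment_le_of_ae_deriv_le:
  fixes f :: "real \<Rightarrow> real"
  assumes lip: "L-lipschitz_on UNIV f" and N: "negligible N" and "a \<le> b" "0 \<le> M"
    and der: "\<And>t. t \<in> {a..b} - N \<Longrightarrow> \<exists>D. (f has_real_derivative D) (at t) \<and> D \<le> M"
  shows "f b - f a \<le> M * (b - a)"
proof (rule field_le_epsilon)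
  fix e :: real
  assume "0 < e"
  have L: "0 \<le> L"
    using lip lipschitz_on_nonneg by blast
  obtain U where U: "open U" "N \<subseteq> U" "U \<in> lmeasurable" "measure lebesgue U \<le> e / (2 * (L + 1))"
    using negligible_imp_small_open_superset[OF N, of "e / (2 * (L + 1))"] \<open>0 < e\<close> L by auto
  define e' where "e' = e / (2 * (b - a + 1))"
  have "f b - f a \<le> (M + e') * (b - a) + L * measure lebesgue U"
    using \<open>0 < e\<close> \<open>a \<le> b\<close> der U
    by (intro lipschitz_increment_le_open_cover[OF lip U(1,3) \<open>a \<le> b\<close> \<open>0 \<le> M\<close>]) (auto simp: e'_def)
  also have "e' * (b - a) \<le> e / 2"
    using \<open>0 < e\<close> \<open>a \<le> b\<close> by (simp add: e'_def field_simps)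
  moreover have "L * measure lebesgue U \<le> e / 2"
  proof -
    have "L * measure lebesgue U \<le> L * (e / (2 * (L + 1)))"
      using mult_left_mono[OF U(4) L] .
    also have "\<dots> \<le> e / 2"
      using L \<open>0 < e\<close> by (simp add: field_simps)
    finally show ?thesis .
  qed
  ultimately show "f b - f a \<le> M * (b - a) + e"
    by (simp add: algebra_simps)
qed

lemma AE_lborel_obtain_in_ball:
  fixes c :: "'a::euclidean_space"
  assumes "AE x in lborel. P x" "0 < r"
  obtains x where "x \<in> ball c r" "P x"
proof -
  from assms(1) obtain N where N: "{x \<in> space lborel. \<not> P x} \<subseteq> N" "N \<in> null_sets lborel"
    by (rule AE_E) (simp add: null_sets_def)
  have "\<not> ball c r \<subseteq> N"
  proof
    assume "ball c r \<subseteq> N"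
    moreover have "negligible N"
      using N(2) by (simp add: negligible_iff_null_sets null_sets_completionI)
    ultimately show False
      using open_not_negligible[of "ball c r"] \<open>0 < r\<close> negligible_subset by auto
  qed
  then obtain x where "x \<in> ball c r" "x \<notin> N"
    by blast
  with N(1) that show thesis
    by auto
qed

lemma negligible_line_sections_nearby:
  fixes N :: "'a::euclidean_space set"
  assumes N: "negligible N" and "0 < r"
  obtains z where "norm z < r" "negligible {t::real. p + z + t *\<^sub>R v \<in> N}"
proof -
  obtain N' where N': "N' \<in> null_sets lborel" "N \<subseteq> N'"
    using N unfolding negligible_iff_null_sets null_sets_completion_iff2 by blast
  have N'_borel: "N' \<in> sets borel"
    using N'(1) by (simp add: null_sets_def)
  have "AE z in lborel. p + z + t *\<^sub>R v \<notin> N'" for t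
  proof -
    have "{z. z - (- (p + t *\<^sub>R v)) \<in> N'} \<in> null_sets lborel"
      by (rule null_sets_translation[OF N'(1)])
    then show ?thesis
      by (rule AE_I') (auto simp: algebra_simps)
  qed
  moreover have "{x \<in> space (lborel \<Otimes>\<^sub>M lborel). p + snd x + fst x *\<^sub>R v \<notin> N'}
      \<in> sets ((lborel :: real measure) \<Otimes>\<^sub>M (lborel :: 'a measure))"
    using N'_borel by measurable
  ultimately have "AE z in lborel. AE t in lborel. p + z + t *\<^sub>R v \<notin> N'"
    using lborel_pair.AE_commute[of "\<lambda>t z. p + z + t *\<^sub>R v \<notin> N'"] by simp
  then obtain z where z: "z \<in> ball 0 r" "AE t in lborel. p + z + t *\<^sub>R v \<notin> N'"
    using \<open>0 < r\<close> by (rule AE_lborel_obtain_in_ball)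
  have "{t. p + z + t *\<^sub>R v \<in> N'} \<in> null_sets lborel"
    using z(2) N'_borel by (simp add: AE_iff_null_sets)
  then have "negligible {t. p + z + t *\<^sub>R v \<in> N'}"
    by (simp add: negligible_iff_null_sets null_sets_completionI)
  then have "negligible {t. p + z + t *\<^sub>R v \<in> N}"
    by (rule negligible_subset) (use N'(2) in auto)
  with z(1) show thesis
    using that by simp
qed

definition gradient_le_at :: "('a::real_normed_vector \<Rightarrow> real) \<Rightarrow> real \<Rightarrow> 'a \<Rightarrow> bool" where
  "gradient_le_at w c x \<longleftrightarrow>
     w differentiable (at x) \<and> (\<forall>D. (w has_derivative D) (at x) \<longrightarrow> (\<forall>v. \<bar>D v\<bar> \<le> c * norm v))"

lemma gradient_le_at_mono: "gradient_le_at w c x \<Longrightarrow> c \<le> M \<Longrightarrow> gradient_le_at w M x"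
  unfolding gradient_le_at_def by (meson mult_right_mono norm_ge_zero order_trans)

lemma increment_le_along_line:
  fixes w :: "'a::real_normed_vector \<Rightarrow> real"
  assumes lip: "C-lipschitz_on UNIV w" and T: "negligible T" and "0 \<le> M"
    and grad: "\<And>t. t \<in> {0..1} - T \<Longrightarrow> gradient_le_at w M (a + t *\<^sub>R v)"
  shows "w a - w (a + v) \<le> M * norm v"
proof -
  define f where "f t = - w (a + t *\<^sub>R v)" for t
  have "(C * norm v)-lipschitz_on UNIV f"
  proof (rule lipschitz_onI)
    fix s t :: real
    have "dist (a + s *\<^sub>R v) (a + t *\<^sub>R v) = dist s t * norm v"
      by (simp add: dist_norm dist_real_def scaleR_diff_left[symmetric])
    then show "dist (f s) (f t) \<le> C * norm v * dist s t"
      using lipschitz_onD[OF lip, of "a + s *\<^sub>R v" "a + t *\<^sub>R v"]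
      by (simp add: f_def dist_real_def abs_minus_commute mult_ac)
  qed (use lipschitz_on_nonneg[OF lip] in simp)
  moreover have "\<exists>D. (f has_real_derivative D) (at t) \<and> D \<le> M * norm v"
    if t: "t \<in> {0..1} - T" for t
  proof -
    obtain D where D: "(w has_derivative D) (at (a + t *\<^sub>R v))" "\<And>u. \<bar>D u\<bar> \<le> M * norm u"
      using grad[OF t] unfolding gradient_le_at_def differentiable_def by blast
    have "((\<lambda>t. a + t *\<^sub>R v) has_derivative (\<lambda>s. s *\<^sub>R v)) (at t)"
      by (auto intro!: derivative_eq_intros)
    from has_derivative_compose[OF this D(1)]
    have "(f has_derivative (\<lambda>s. - D (s *\<^sub>R v))) (at t)"
      unfolding f_def by (rule has_derivative_minus)
    moreover have "(\<lambda>s. - D (s *\<^sub>R v)) = (*) (- D v)"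
      using linear_scale[OF has_derivative_linear[OF D(1)]] by (auto simp: fun_eq_iff)
    ultimately have "(f has_real_derivative - D v) (at t)"
      by (simp add: has_field_derivative_def)
    moreover have "- D v \<le> M * norm v"
      using D(2)[of v] by linarith
    ultimately show ?thesis
      by blast
  qed
  ultimately have "f 1 - f 0 \<le> M * norm v * (1 - 0)"
    using \<open>0 \<le> M\<close> by (intro lipschitz_increment_le_of_ae_deriv_le[OF _ T]) auto
  then show ?thesis
    by (simp add: f_def)
qed

lemma increment_le_of_ae_gradient_le:
  fixes w :: "'a::euclidean_space \<Rightarrow> real"
  assumes lip: "C-lipschitz_on UNIV w"
    and ae: "AE x in lebesgue. gradient_le_at w (\<rho> x) x"
    and S: "open S" "closed_segment p q \<subseteq> S"
    and bound: "\<And>x. x \<in> S \<Longrightarrow> \<rho> x \<le> M" and "0 \<le> M"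
  shows "w p - w q \<le> M * dist p q"
proof (rule field_le_epsilon)
  fix e :: real
  assume "0 < e"
  have C: "0 \<le> C"
    using lip lipschitz_on_nonneg by blast
  from ae obtain N where N: "{x \<in> space lebesgue. \<not> gradient_le_at w (\<rho> x) x} \<subseteq> N"
      "N \<in> null_sets lebesgue"
    by (rule AE_E) (simp add: null_sets_def)
  obtain \<delta> where \<delta>: "0 < \<delta>" "\<And>x. x \<in> closed_segment p q \<Longrightarrow> ball x \<delta> \<subseteq> S"
    using Heine_Borel_lemma[OF compact_segment, of p q "{S}"] S by auto
  \<comment> \<open>By Fubini, a translate of the segment close to it meets the exceptional set in a null set.\<close>
  obtain z where z: "norm z < min \<delta> (e / (2 * C + 1))"
      "negligible {t::real. p + z + t *\<^sub>R (q - p) \<in> N}"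
    using negligible_line_sections_nearby[of N "min \<delta> (e / (2 * C + 1))" p "q - p"]
      N(2) \<delta>(1) \<open>0 < e\<close> C by (auto simp: negligible_iff_null_sets)
  have "w (p + z) - w (p + z + (q - p)) \<le> M * norm (q - p)"
  proof (rule increment_le_along_line[OF lip z(2) \<open>0 \<le> M\<close>])
    fix t :: real
    assume t: "t \<in> {0..1} - {t. p + z + t *\<^sub>R (q - p) \<in> N}"
    have "p + t *\<^sub>R (q - p) \<in> closed_segment p q"
      using t by (auto simp: closed_segment_def algebra_simps intro!: exI[of _ t])
    then have "p + z + t *\<^sub>R (q - p) \<in> S"
      using \<delta>(2) z(1) by (force simp: dist_norm)
    then show "gradient_le_at w M (p + z + t *\<^sub>R (q - p))"
      using t N(1) bound by (auto intro: gradient_le_at_mono)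
  qed
  moreover have "p + z + (q - p) = q + z"
    by (simp add: algebra_simps)
  moreover have "\<bar>w p - w (p + z)\<bar> \<le> C * norm z" "\<bar>w q - w (q + z)\<bar> \<le> C * norm z"
    using lipschitz_onD[OF lip, of p "p + z"] lipschitz_onD[OF lip, of q "q + z"]
    by (simp_all add: dist_real_def dist_norm)
  moreover have "2 * (C * norm z) \<le> e"
  proof -
    have "2 * C * norm z \<le> (2 * C + 1) * (e / (2 * C + 1))"
      using z(1) C by (intro mult_mono) auto
    then show ?thesis
      using C by simp
  qed
  ultimately show "w p - w q \<le> M * dist p q + e"
    by (simp add: dist_norm norm_minus_commute)
qed

section \<open>Points of zero density of an open set\<close>

lemma emeasure_disjoint_cballs_le_density:
  fixes V :: "real set" and c r :: "'i \<Rightarrow> real"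
  assumes V: "V \<in> sets lebesgue" and "0 < \<epsilon>" and D: "countable D"
    and disj: "disjoint_family_on (\<lambda>i. cball (c i) (r i)) D"
    and dense: "\<And>i. i \<in> D \<Longrightarrow> 0 < r i \<and> \<epsilon> * r i < measure lebesgue (V \<inter> cball (c i) (r i))"
  shows "emeasure lebesgue (\<Union>i\<in>D. cball (c i) (r i))
    \<le> ennreal (2 / \<epsilon>) * emeasure lebesgue (V \<inter> (\<Union>i\<in>D. cball (c i) (r i)))"
proof -
  have ball_le: "emeasure lebesgue (cball (c i) (r i))
      \<le> ennreal (2 / \<epsilon>) * emeasure lebesgue (V \<inter> cball (c i) (r i))" if "i \<in> D" for i
  proof -
    have fin: "V \<inter> cball (c i) (r i) \<in> lmeasurable"
      using fmeasurable_Int_fmeasurable[OF _ V, of "cball (c i) (r i)"] by (simp add: Int_commute)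
    have "2 * r i \<le> 2 / \<epsilon> * measure lebesgue (V \<inter> cball (c i) (r i))"
      using dense[OF that] \<open>0 < \<epsilon>\<close> by (simp add: field_simps)
    then have le: "ennreal (2 * r i) \<le> ennreal (2 / \<epsilon>) * ennreal (measure lebesgue (V \<inter> cball (c i) (r i)))"
      using \<open>0 < \<epsilon>\<close> by (simp add: ennreal_mult[symmetric] ennreal_leI)
    have m1: "emeasure lebesgue (cball (c i) (r i)) = ennreal (2 * r i)"
      using dense[OF that] by (simp add: cball_eq_atLeastAtMost)
    have m2: "emeasure lebesgue (V \<inter> cball (c i) (r i)) = measure lebesgue (V \<inter> cball (c i) (r i))"
      using fin by (rule emeasure_eq_measure2)
    show ?thesis
      unfolding m1 m2 by (rule le)
  qed
  have "emeasure lebesgue (\<Union>i\<in>D. cball (c i) (r i))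
      = (\<integral>\<^sup>+i. emeasure lebesgue (cball (c i) (r i)) \<partial>count_space D)"
    by (rule emeasure_UN_countable[OF _ D disj]) auto
  also have "\<dots> \<le> (\<integral>\<^sup>+i. ennreal (2 / \<epsilon>) * emeasure lebesgue (V \<inter> cball (c i) (r i)) \<partial>count_space D)"
    by (rule nn_integral_mono) (use ball_le in auto)
  also have "\<dots> = ennreal (2 / \<epsilon>) * (\<integral>\<^sup>+i. emeasure lebesgue (V \<inter> cball (c i) (r i)) \<partial>count_space D)"
    by (rule nn_integral_cmult) simp
  also have "(\<integral>\<^sup>+i. emeasure lebesgue (V \<inter> cball (c i) (r i)) \<partial>count_space D)
      = emeasure lebesgue (\<Union>i\<in>D. V \<inter> cball (c i) (r i))"
    using disj V by (intro emeasure_UN_countable[OF _ D, symmetric])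
      (auto simp: disjoint_family_on_def)
  finally show ?thesis
    by (simp only: Int_UN_distrib)
qed

lemma measure_outer_le_of_cover:
  fixes B U :: "'a::euclidean_space set"
  assumes null: "negligible (B - U)" and U: "U \<in> sets lebesgue"
    and U_le: "emeasure lebesgue U \<le> ennreal \<eta>" and "0 \<le> \<eta>"
  shows "\<exists>T. B \<subseteq> T \<and> T \<in> lmeasurable \<and> measure lebesgue T \<le> \<eta>"
proof (intro exI conjI)
  have U_fin: "U \<in> lmeasurable"
    using U U_le by (intro fmeasurableI) (auto simp: top_unique dest: le_less_trans[OF _ ennreal_less_top])
  have B_U: "B - U \<in> null_sets lebesgue"
    using null by (simp add: negligible_iff_null_sets)
  show "B \<subseteq> U \<union> (B - U)"
    by blast
  show "U \<union> (B - U) \<in> lmeasurable"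
    by (rule fmeasurable.Un[OF U_fin fmeasurableI_null_sets[OF B_U]])
  have "measure lebesgue U \<le> \<eta>"
    using U_le U_fin \<open>0 \<le> \<eta>\<close> by (simp add: emeasure_eq_measure2)
  then show "measure lebesgue (U \<union> (B - U)) \<le> \<eta>"
    unfolding measure_Un_null_set[OF fmeasurableD[OF U_fin] B_U] .
qed

lemma Vitali_cover_by_dense_cballs:
  fixes V C B :: "real set"
  assumes "closed C" "B \<inter> C = {}"
    and dense: "\<And>x d. x \<in> B \<Longrightarrow> 0 < d \<Longrightarrow> \<exists>r. 0 < r \<and> r < d \<and> \<epsilon> * r < measure lebesgue (V \<inter> cball x r)"
  obtains D where "countable D" "disjoint_family_on (\<lambda>i. cball (fst i) (snd i)) D"
    "\<And>i. i \<in> D \<Longrightarrow> 0 < snd i \<and> cball (fst i) (snd i) \<subseteq> - C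
      \<and> \<epsilon> * snd i < measure lebesgue (V \<inter> cball (fst i) (snd i))"
    "negligible (B - (\<Union>i\<in>D. cball (fst i) (snd i)))"
proof -
  define K where "K = {(t, r). 0 < r \<and> cball t r \<subseteq> - C \<and> \<epsilon> * r < measure lebesgue (V \<inter> cball t r)}"
  have cover: "\<exists>i. i \<in> K \<and> x \<in> cball (fst i) (snd i) \<and> snd i < d" if x: "x \<in> B" and "0 < d" for x d
  proof -
    have "open (- C)" "x \<in> - C"
      using x assms(1,2) by auto
    then obtain \<rho> where \<rho>: "0 < \<rho>" "ball x \<rho> \<subseteq> - C"
      by (rule openE)
    obtain r where r: "0 < r" "r < min d \<rho>" "\<epsilon> * r < measure lebesgue (V \<inter> cball x r)"
      using dense[OF x, of "min d \<rho>"] \<open>0 < d\<close> \<rho>(1) by auto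
    have "cball x r \<subseteq> ball x \<rho>"
      using r(2) by (simp add: cball_subset_ball_iff)
    then have "cball x r \<subseteq> - C"
      using \<rho>(2) by blast
    with r show ?thesis
      by (intro exI[of _ "(x, r)"]) (auto simp: K_def)
  qed
  obtain D where D: "countable D" "D \<subseteq> K"
      "pairwise (\<lambda>i j. disjnt (cball (fst i) (snd i)) (cball (fst j) (snd j))) D"
      "negligible (B - (\<Union>i\<in>D. cball (fst i) (snd i)))"
  proof (rule Vitali_covering_theorem_cballs[of K snd B fst])
    show "\<And>i. i \<in> K \<Longrightarrow> 0 < snd i"
      by (auto simp: K_def)
    show "\<And>x d. x \<in> B \<Longrightarrow> 0 < d \<Longrightarrow> \<exists>i. i \<in> K \<and> x \<in> cball (fst i) (snd i) \<and> snd i < d"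
      by (rule cover)
  qed
  show thesis
  proof (rule that[OF D(1) _ _ D(4)])
    show "disjoint_family_on (\<lambda>i. cball (fst i) (snd i)) D"
      using D(3) unfolding disjoint_family_on_def pairwise_def disjnt_def by blast
    fix i
    assume "i \<in> D"
    then have "i \<in> K"
      using D(2) by blast
    then show "0 < snd i \<and> cball (fst i) (snd i) \<subseteq> - C \<and> \<epsilon> * snd i < measure lebesgue (V \<inter> cball (fst i) (snd i))"
      by (cases i) (simp add: K_def)
  qed
qed

lemma negligible_upper_density_gt:
  fixes V :: "real set"
  assumes "open V" and "0 < \<epsilon>"
  shows "negligible {t. t \<notin> V \<and> (\<forall>d>0. \<exists>r. 0 < r \<and> r < d \<and> \<epsilon> * r < measure lebesgue (V \<inter> cball t r))}"
    (is "negligible ?B")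
  unfolding negligible_outer_le
proof (intro allI impI)
  fix \<eta> :: real
  assume "0 < \<eta>"
  have V: "V \<in> sets lebesgue"
    using \<open>open V\<close> by simp
  obtain C where C: "closed C" "C \<subseteq> V" "V - C \<in> lmeasurable"
      "emeasure lebesgue (V - C) < ennreal (\<epsilon> * \<eta> / 2)"
    using sets_lebesgue_inner_closed[OF V, of "\<epsilon> * \<eta> / 2"] \<open>0 < \<eta>\<close> \<open>0 < \<epsilon>\<close> by auto
  \<comment> \<open>Balls on which \<open>V\<close> is dense, avoiding the inner approximation \<open>C\<close>, only see \<open>V - C\<close>.\<close>
  obtain D where D: "countable D" "disjoint_family_on (\<lambda>i. cball (fst i) (snd i)) D"
      "\<And>i. i \<in> D \<Longrightarrow> 0 < snd i \<and> cball (fst i) (snd i) \<subseteq> - C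
        \<and> \<epsilon> * snd i < measure lebesgue (V \<inter> cball (fst i) (snd i))"
      "negligible (?B - (\<Union>i\<in>D. cball (fst i) (snd i)))"
    by (rule Vitali_cover_by_dense_cballs[OF C(1), of ?B \<epsilon> V]) (use C(2) in auto)
  define U where "U = (\<Union>i\<in>D. cball (fst i) (snd i))"
  have "emeasure lebesgue U \<le> ennreal (2 / \<epsilon>) * emeasure lebesgue (V \<inter> U)"
    unfolding U_def using D(1-3) V \<open>0 < \<epsilon>\<close> by (intro emeasure_disjoint_cballs_le_density) auto
  also have "emeasure lebesgue (V \<inter> U) \<le> emeasure lebesgue (V - C)"
    using D(3) C(3) by (intro emeasure_mono) (auto simp: U_def fmeasurableD)
  also have "ennreal (2 / \<epsilon>) * emeasure lebesgue (V - C) \<le> ennreal (2 / \<epsilon>) * ennreal (\<epsilon> * \<eta> / 2)"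
    using C(4) by (intro mult_left_mono) auto
  also have "\<dots> = ennreal \<eta>"
    using \<open>0 < \<epsilon>\<close> \<open>0 < \<eta>\<close> by (simp add: ennreal_mult[symmetric])
  finally have "emeasure lebesgue U \<le> ennreal \<eta>"
    by (simp add: mult_left_mono)
  moreover have "U \<in> sets lebesgue"
    unfolding U_def using D(1) by (intro sets.countable_UN') auto
  ultimately show "\<exists>T. ?B \<subseteq> T \<and> T \<in> lmeasurable \<and> measure lebesgue T \<le> \<eta>"
    using D(4) \<open>0 < \<eta>\<close> by (intro measure_outer_le_of_cover) (auto simp: U_def)
qed

definition zero_density_at :: "real set \<Rightarrow> real \<Rightarrow> bool" where
  "zero_density_at A t \<longleftrightarrow>
     (\<forall>e>0. \<exists>d>0. \<forall>r. 0 < r \<and> r < d \<longrightarrow> measure lebesgue (A \<inter> cball t r) \<le> e * r)"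

lemma zero_density_at_subset_near:
  assumes "zero_density_at A t" "0 < \<rho>" "B \<inter> ball t \<rho> \<subseteq> A" "A \<in> sets lebesgue" "B \<in> sets lebesgue"
  shows "zero_density_at B t"
  unfolding zero_density_at_def
proof (intro allI impI)
  fix e :: real
  assume "0 < e"
  with assms(1) obtain d where d: "0 < d" "\<And>r. 0 < r \<Longrightarrow> r < d \<Longrightarrow> measure lebesgue (A \<inter> cball t r) \<le> e * r"
    unfolding zero_density_at_def by blast
  have "measure lebesgue (B \<inter> cball t r) \<le> e * r" if "0 < r" "r < min d \<rho>" for r
  proof -
    have "cball t r \<subseteq> ball t \<rho>"
      using that by (simp add: cball_subset_ball_iff)
    then have "B \<inter> cball t r \<subseteq> A \<inter> cball t r"
      using assms(3) by blast
    moreover have "A \<inter> cball t r \<in> lmeasurable"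
      using fmeasurable_Int_fmeasurable[OF lmeasurable_cball assms(4), of t r] by (simp add: Int_commute)
    ultimately have "measure lebesgue (B \<inter> cball t r) \<le> measure lebesgue (A \<inter> cball t r)"
      using assms(5) by (intro measure_mono_fmeasurable) auto
    also have "\<dots> \<le> e * r"
      using d(2) that by simp
    finally show ?thesis .
  qed
  then show "\<exists>d>0. \<forall>r. 0 < r \<and> r < d \<longrightarrow> measure lebesgue (B \<inter> cball t r) \<le> e * r"
    using d(1) \<open>0 < \<rho>\<close> by (intro exI[of _ "min d \<rho>"]) auto
qed

lemma negligible_not_zero_density_at:
  fixes V :: "real set"
  assumes "open V"
  shows "negligible {t. t \<notin> V \<and> \<not> zero_density_at V t}"
proof (rule negligible_subset)
  let ?B = "\<lambda>n::nat. {t. t \<notin> V \<and>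
    (\<forall>d>0. \<exists>r. 0 < r \<and> r < d \<and> 1 / Suc n * r < measure lebesgue (V \<inter> cball t r))}"
  show "negligible (\<Union>n. ?B n)"
    by (intro negligible_Union_nat negligible_upper_density_gt[OF assms]) simp
  show "{t. t \<notin> V \<and> \<not> zero_density_at V t} \<subseteq> (\<Union>n. ?B n)"
  proof
    fix t
    assume "t \<in> {t. t \<notin> V \<and> \<not> zero_density_at V t}"
    then have "t \<notin> V" and "\<not> zero_density_at V t"
      by auto
    then obtain e where "0 < e"
      and e: "\<forall>d>0. \<exists>r. 0 < r \<and> r < d \<and> \<not> measure lebesgue (V \<inter> cball t r) \<le> e * r"
      unfolding zero_density_at_def by blast
    obtain n where n: "1 / Suc n < e"
      using \<open>0 < e\<close> by (rule nat_approx_posE)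
    have "\<exists>r. 0 < r \<and> r < d \<and> 1 / Suc n * r < measure lebesgue (V \<inter> cball t r)" if "0 < d" for d
    proof -
      obtain r where r: "0 < r" "r < d" "e * r < measure lebesgue (V \<inter> cball t r)"
        using e \<open>0 < d\<close> by (auto simp: not_le)
      moreover have "1 / Suc n * r < e * r"
        using n r(1) by (rule mult_strict_right_mono)
      ultimately show ?thesis
        by (meson less_trans)
    qed
    with \<open>t \<notin> V\<close> show "t \<in> (\<Union>n. ?B n)"
      by blast
  qed
qed

lemma has_real_derivative_cumulative_measure_0:
  assumes S: "S \<in> lmeasurable" and "0 < \<rho>" "S \<inter> ball t \<rho> = {}"
  shows "(cumulative_measure S has_real_derivative 0) (at t)"
  unfolding has_field_derivative_def has_derivative_at_alt
proof (intro conjI allI impI exI[of _ \<rho>])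
  fix y :: real
  assume "norm (y - t) < \<rho>"
  then have "{min y t<..max y t} \<subseteq> ball t \<rho>"
    by (auto simp: dist_real_def abs_if min_def max_def split: if_splits)
  then have "S \<inter> {min y t<..max y t} = {}"
    using assms(3) by blast
  then have "cumulative_measure S (max y t) - cumulative_measure S (min y t) = 0"
    using cumulative_measure_diff[OF S, of "min y t" "max y t"] by simp
  then show "norm (cumulative_measure S y - cumulative_measure S t - 0 * (y - t)) \<le> e * norm (y - t)"
    if "0 < e" for e
    using that by (cases "y \<le> t") (auto simp: max_def min_def)
qed (use \<open>0 < \<rho>\<close> in \<open>auto intro: bounded_linear_mult_right\<close>)

lemma has_real_derivative_cumulative_measure_1:
  assumes S: "S \<in> lmeasurable" and dens: "zero_density_at (- S) t"
  shows "(cumulative_measure S has_real_derivative 1) (at t)"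
  unfolding has_field_derivative_def has_derivative_at_alt
proof (intro conjI allI impI)
  fix e :: real
  assume "0 < e"
  with dens obtain d where d: "0 < d"
      "\<And>r. 0 < r \<Longrightarrow> r < d \<Longrightarrow> measure lebesgue (- S \<inter> cball t r) \<le> e * r"
    unfolding zero_density_at_def by blast
  have "\<bar>cumulative_measure S y - cumulative_measure S t - (y - t)\<bar> \<le> e * \<bar>y - t\<bar>"
    if "\<bar>y - t\<bar> < d" for y
  proof (cases "y = t")
    case False
    then show ?thesis
      using cumulative_measure_linear_error_le[OF S, of y t] d(2)[of "\<bar>y - t\<bar>"] that by simp
  qed simp
  with d(1) show "\<exists>d>0. \<forall>y. norm (y - t) < d \<longrightarrow>
      norm (cumulative_measure S y - cumulative_measure S t - 1 * (y - t)) \<le> e * norm (y - t)"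
    by auto
qed (auto intro: bounded_linear_mult_right)

lemma has_real_derivative_cumulative_measure_interval_1:
  fixes V :: "real set"
  assumes V: "open V" and t: "0 < t" "t < 1" and dens: "zero_density_at V t"
  shows "(cumulative_measure ({0..1} - V) has_real_derivative 1) (at t)"
proof (rule has_real_derivative_cumulative_measure_1)
  show S: "{0..1} - V \<in> lmeasurable"
    using V by (simp add: fmeasurable_Diff)
  show "zero_density_at (- ({0..1} - V)) t"
  proof (rule zero_density_at_subset_near[OF dens])
    show "0 < min t (1 - t)"
      using t by simp
    show "- ({0..1} - V) \<inter> ball t (min t (1 - t)) \<subseteq> V"
      by (auto simp: dist_real_def)
    show "V \<in> sets lebesgue"
      using V by simp
    show "- ({0..1} - V) \<in> sets lebesgue"
      using S by (simp only: Compl_in_sets_lebesgue fmeasurableD)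
  qed
qed

lemma negligible_not_has_derivative_cumulative_measure:
  fixes V :: "real set"
  assumes V: "open V"
  defines "F \<equiv> cumulative_measure ({0..1} - V)"
  shows "negligible {t. \<nexists>D. (F has_real_derivative D) (at t) \<and> (D = 0 \<or> D = 1 \<and> t \<notin> V)}"
proof (rule negligible_subset)
  have S: "{0..1} - V \<in> lmeasurable"
    using V by (simp add: fmeasurable_Diff)
  show "negligible ({0, 1} \<union> {t. t \<notin> V \<and> \<not> zero_density_at V t})"
    using negligible_not_zero_density_at[OF V] by simp
  have "\<exists>D. (F has_real_derivative D) (at t) \<and> (D = 0 \<or> D = 1 \<and> t \<notin> V)"
    if t: "t \<notin> {0, 1}" "t \<in> V \<or> zero_density_at V t" for t
  proof (cases "t \<in> V \<or> t < 0 \<or> 1 < t")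
    case True
    then obtain \<rho> where "0 < \<rho>" "({0..1} - V) \<inter> ball t \<rho> = {}"
    proof (elim disjE)
      assume "t \<in> V"
      then obtain \<rho> where "0 < \<rho>" "ball t \<rho> \<subseteq> V"
        using V openE by blast
      then show thesis
        using that by blast
    next
      assume "t < 0"
      then show thesis
        by (intro that[of "- t"]) (auto simp: dist_real_def)
    next
      assume "1 < t"
      then show thesis
        by (intro that[of "t - 1"]) (auto simp: dist_real_def)
    qed
    then show ?thesis
      unfolding F_def using has_real_derivative_cumulative_measure_0[OF S] by blast
  next
    case False
    with t have "0 < t" "t < 1" "t \<notin> V" "zero_density_at V t"
      by auto
    then show ?thesis
      unfolding F_def using has_real_derivative_cumulative_measure_interval_1[OF V] by blast
  qed
  then show "{t. \<nexists>D. (F has_real_derivative D) (at t) \<and> (D = 0 \<or> D = 1 \<and> t \<notin> V)}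
      \<subseteq> {0, 1} \<union> {t. t \<notin> V \<and> \<not> zero_density_at V t}"
    by blast
qed

lemma admissible_iff_gradient_le:
  "admissible q \<kappa> w \<longleftrightarrow>
     (\<exists>C. C-lipschitz_on UNIV w) \<and> (AE x in lebesgue. gradient_le_at w (sqrt (gfac q \<kappa> x)) x)"
  by (simp add: admissible_def gradient_le_at_def)

lemma open_O_set: "open (O_set q \<kappa>)"
  unfolding O_set_def by (auto intro!: open_UN)

lemma open_open_cube: "open (open_cube :: (real \<times> (real ^ 'm)) set)"
proof -
  have "(open_cube :: (real \<times> (real ^ 'm)) set) = {0<..<1} \<times> box 0 1"
    by (auto simp: open_cube_def mem_box_cart)
  then show ?thesis
    by (metis open_Times open_box open_greaterThanLessThan)
qed

lemma theta_eq: "theta q \<kappa> t = (if t \<in> O_set q \<kappa> then 1 else 2)"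
  by (simp add: theta_def)

lemma gfac_bounds: "1 \<le> gfac q \<kappa> x" "gfac q \<kappa> x \<le> 2"
  by (auto simp: gfac_def theta_eq)

lemma gfac_eq_2: "fst x \<notin> O_set q \<kappa> \<Longrightarrow> gfac q \<kappa> x = 2"
  by (simp add: gfac_def theta_eq)

lemma gfac_eq_1: "x \<in> open_cube \<Longrightarrow> fst x \<in> O_set q \<kappa> \<Longrightarrow> gfac q \<kappa> x = 1"
  by (simp add: gfac_def theta_eq)

lemma admissible_increment_le:
  assumes "admissible q \<kappa> w" "open S" "closed_segment p p' \<subseteq> S" "0 \<le> M"
    and "\<And>x. x \<in> S \<Longrightarrow> gfac q \<kappa> x \<le> M\<^sup>2"
  shows "w p - w p' \<le> M * dist p p'"
proof -
  obtain C where lip: "C-lipschitz_on UNIV w"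
    and ae: "AE x in lebesgue. gradient_le_at w (sqrt (gfac q \<kappa> x)) x"
    using assms(1) by (auto simp: admissible_iff_gradient_le)
  show ?thesis
    using assms(5) by (intro increment_le_of_ae_gradient_le[OF lip ae assms(2,3) _ assms(4)] real_le_lsqrt[OF assms(4)])
qed

lemma admissible_increment_le_sqrt2:
  "admissible q \<kappa> w \<Longrightarrow> w p - w p' \<le> sqrt 2 * dist p p'"
  by (rule admissible_increment_le[where S = UNIV]) (auto simp: gfac_bounds)

lemma admissible_increment_le_in_O_set:
  fixes p p' :: "real \<times> (real ^ 'm)"
  assumes adm: "admissible q \<kappa> w" and seg: "closed_segment p p' \<subseteq> open_cube"
    and "fst p \<in> O_set q \<kappa>" "fst p' = fst p"
  shows "w p - w p' \<le> dist p p'"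
proof -
  define S :: "(real \<times> (real ^ 'm)) set" where "S = open_cube \<inter> fst -` O_set q \<kappa>"
  have "open S"
    unfolding S_def by (intro open_Int open_open_cube open_vimage_fst open_O_set)
  moreover have "closed_segment p p' \<subseteq> S"
  proof
    fix x
    assume x: "x \<in> closed_segment p p'"
    then obtain u where "x = (1 - u) *\<^sub>R p + u *\<^sub>R p'"
      unfolding in_segment by blast
    then have "fst x = (1 - u) * fst p + u * fst p'"
      by simp
    then have "fst x = fst p"
      using assms(4) by (simp add: algebra_simps)
    then show "x \<in> S"
      using x seg assms(3) by (auto simp: S_def)
  qed
  moreover have "gfac q \<kappa> x \<le> 1\<^sup>2" if "x \<in> S" for x
    using that by (simp add: S_def gfac_eq_1)
  ultimately show ?thesis
    using admissible_increment_le[OF adm, of S p p' 1] by simp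
qed

lemma admissible_zero: "admissible q \<kappa> (\<lambda>_. 0)"
  unfolding admissible_iff_gradient_le
proof (intro conjI exI AE_I2)
  fix x :: "real \<times> (real ^ 'm)"
  show "gradient_le_at (\<lambda>_. 0) (sqrt (gfac q \<kappa> x)) x"
    unfolding gradient_le_at_def
  proof (intro conjI allI impI differentiable_const)
    fix D v
    assume "((\<lambda>_. 0 :: real) has_derivative D) (at x)"
    then have "D = (\<lambda>_. 0)"
      using has_derivative_unique has_derivative_const by blast
    then show "\<bar>D v\<bar> \<le> sqrt (gfac q \<kappa> x) * norm v"
      using gfac_bounds(1)[of q \<kappa> x] by simp
  qed
qed (rule lipschitz_on_constant)

lemma dist_g_ge:
  assumes "admissible q \<kappa> w"
  shows "w x - w z \<le> dist_g q \<kappa> x z"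
proof -
  have "bdd_above {w x - w z | w. admissible q \<kappa> w}"
    by (rule bdd_aboveI[where M = "sqrt 2 * dist x z"]) (auto intro: admissible_increment_le_sqrt2)
  then show ?thesis
    unfolding dist_g_def using assms by (intro cSup_upper) blast+
qed

lemma dist_g_le:
  assumes "\<And>w. admissible q \<kappa> w \<Longrightarrow> w x - w z \<le> c"
  shows "dist_g q \<kappa> x z \<le> c"
  unfolding dist_g_def
proof (rule cSup_least)
  show "{w x - w z | w. admissible q \<kappa> w} \<noteq> {}"
    using admissible_zero by blast
qed (use assms in blast)

section \<open>The limit norm\<close>

lemma norm_prod_eq: "norm u = sqrt ((fst u)\<^sup>2 + (norm (snd u))\<^sup>2)"
  using norm_Pair[of "fst u" "snd u"] by simp

lemma alpha_scaleR: "alpha (h *\<^sub>R u) = \<bar>h\<bar> * alpha u"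
proof (cases "h = 0")
  case False
  then have "\<bar>h * fst u\<bar> \<le> \<bar>h\<bar> * norm (snd u) \<longleftrightarrow> \<bar>fst u\<bar> \<le> norm (snd u)"
    by (simp add: abs_mult)
  with False show ?thesis
    by (simp add: alpha_def abs_mult algebra_simps)
qed (simp add: alpha_def)

lemma alpha_split:
  fixes v :: "real \<times> (real ^ 'm)"
  obtains V W where "v = V + W" "fst W = 0" "sqrt 2 * norm V + norm W = alpha v"
    "norm V \<le> norm v" "norm W \<le> norm v"
proof -
  define a c where "a = \<bar>fst v\<bar>" and "c = norm (snd v)"
  \<comment> \<open>The optimal diagonal part has vertical length \<open>b = min a c\<close>: its horizontal length \<open>a\<close>, or all of \<open>c\<close>.\<close>
  define b where "b = min a c"
  define t where "t = (if c = 0 then 0 else b / c)"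
  have "0 \<le> b" "b \<le> a" "b \<le> c"
    by (auto simp: a_def b_def c_def)
  have t: "0 \<le> t" "t \<le> 1" "t * c = b"
    using \<open>0 \<le> b\<close> \<open>b \<le> c\<close> by (auto simp: t_def)
  have nv: "norm v = sqrt (a\<^sup>2 + c\<^sup>2)"
    by (simp add: norm_prod_eq a_def c_def)
  define V W where "V = (fst v, t *\<^sub>R snd v)" and "W = (0::real, (1 - t) *\<^sub>R snd v)"
  have nV: "norm V = sqrt (a\<^sup>2 + b\<^sup>2)"
    using t by (simp add: V_def norm_Pair a_def c_def[symmetric] power_mult_distrib)
  have "norm W = norm ((1 - t) *\<^sub>R snd v)"
    by (simp add: W_def norm_Pair)
  also have "\<dots> = \<bar>1 - t\<bar> * c"
    by (simp only: norm_scaleR c_def)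
  also have "\<dots> = c - b"
    using t by (simp add: algebra_simps)
  finally have nW: "norm W = c - b" .
  show thesis
  proof
    show "v = V + W"
      by (simp add: V_def W_def prod_eq_iff algebra_simps)
    show "fst W = 0"
      by (simp add: W_def)
    show "sqrt 2 * norm V + norm W = alpha v"
    proof (cases "a \<le> c")
      case True
      have "sqrt 2 * sqrt (a\<^sup>2 + a\<^sup>2) = sqrt ((2 * a)\<^sup>2)"
        by (simp add: real_sqrt_mult[symmetric] power2_eq_square algebra_simps)
      also have "\<dots> = 2 * a"
        by (simp only: real_sqrt_abs) (simp add: a_def)
      finally have "sqrt 2 * sqrt (a\<^sup>2 + a\<^sup>2) = 2 * a" .
      with True show ?thesis
        by (simp add: nV nW alpha_def b_def a_def[symmetric] c_def[symmetric])
    next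
      case False
      then show ?thesis
        by (simp add: nV nW nv alpha_def b_def a_def[symmetric] c_def[symmetric])
    qed
    show "norm V \<le> norm v"
      unfolding nV nv using \<open>0 \<le> b\<close> \<open>b \<le> c\<close> by (simp add: power_mono)
    have "c \<le> norm v"
      unfolding nv by (rule real_le_rsqrt) simp
    then show "norm W \<le> norm v"
      using \<open>0 \<le> b\<close> nW by linarith
  qed
qed

lemma alpha_dual:
  fixes v :: "real \<times> (real ^ 'm)"
  obtains A B where "0 \<le> A" "0 \<le> B" "B \<le> 1" "A\<^sup>2 + B\<^sup>2 \<le> 2"
    "A * \<bar>fst v\<bar> + B * norm (snd v) = alpha v"
proof (cases "\<bar>fst v\<bar> \<le> norm (snd v)")
  case True
  then show thesis
    by (intro that[of 1 1]) (auto simp: alpha_def)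
next
  case False
  define a c where "a = \<bar>fst v\<bar>" and "c = norm (snd v)"
  have "c < a" "0 \<le> c"
    using False by (auto simp: a_def c_def)
  define n where "n = norm v"
  have n2: "n\<^sup>2 = a\<^sup>2 + c\<^sup>2"
    by (simp add: n_def norm_prod_eq a_def c_def)
  have "0 < n"
    using \<open>c < a\<close> \<open>0 \<le> c\<close> by (auto simp: n_def a_def)
  \<comment> \<open>Here \<open>alpha v = sqrt 2 * norm v\<close>, realised by \<open>sqrt 2\<close> times the unit vector \<open>(a, c) / n\<close>.\<close>
  show thesis
  proof (rule that[of "sqrt 2 * a / n" "sqrt 2 * c / n"])
    show "0 \<le> sqrt 2 * a / n" "0 \<le> sqrt 2 * c / n"
      using \<open>0 < n\<close> \<open>0 \<le> c\<close> by (auto simp: a_def)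
    have "c\<^sup>2 \<le> a\<^sup>2"
      using \<open>c < a\<close> \<open>0 \<le> c\<close> by (simp add: power_mono)
    then have "2 * c\<^sup>2 \<le> n\<^sup>2"
      using n2 by simp
    then have "(sqrt 2 * c / n)\<^sup>2 \<le> 1"
      using \<open>0 < n\<close> by (simp add: power_divide power_mult_distrib pos_divide_le_eq)
    then show "sqrt 2 * c / n \<le> 1"
      using power2_le_imp_le[of "sqrt 2 * c / n" 1] by simp
    show "(sqrt 2 * a / n)\<^sup>2 + (sqrt 2 * c / n)\<^sup>2 \<le> 2"
    proof -
      have "0 < a\<^sup>2 + c\<^sup>2"
        using \<open>0 < n\<close> n2 by (metis zero_less_power2 less_irrefl)
      then show ?thesis
        using n2 by (simp add: power_divide power_mult_distrib add_divide_distrib[symmetric] pos_divide_le_eq)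
    qed
    have "sqrt 2 * a / n * a + sqrt 2 * c / n * c = sqrt 2 * (a\<^sup>2 + c\<^sup>2) / n"
      by (simp add: power2_eq_square add_divide_distrib algebra_simps)
    also have "\<dots> = sqrt 2 * n"
      using \<open>0 < n\<close> unfolding n2[symmetric] by (simp add: power2_eq_square)
    also have "\<dots> = alpha v"
      using False by (simp add: alpha_def n_def)
    finally show "sqrt 2 * a / n * \<bar>fst v\<bar> + sqrt 2 * c / n * norm (snd v) = alpha v"
      by (simp add: a_def c_def)
  qed
qed

section \<open>Upper bound\<close>

lemma O_set_dense:
  assumes enum: "bij_betw q {1..} (\<rat> \<inter> {0<..<1})" and "0 < \<kappa>"
    and "0 < x" "x < 1" "0 < \<rho>"
  obtains s where "s \<in> O_set q \<kappa>" "\<bar>s - x\<bar> < \<rho>"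
proof -
  obtain r where r: "r \<in> \<rat>" "x < r" "r < x + min \<rho> (1 - x)"
    using Rats_dense_in_real[of x "x + min \<rho> (1 - x)"] assms(3-5) by auto
  then have "r \<in> q ` {1..}"
    using enum assms(3) unfolding bij_betw_def by auto
  then obtain i where "i \<ge> 1" "q i = r"
    by auto
  then have "r \<in> O_set q \<kappa>"
    using \<open>0 < \<kappa>\<close> unfolding O_set_def by force
  with r show thesis
    using that by auto
qed

lemma admissible_increment_le_detour:
  fixes p V W :: "real \<times> (real ^ 'm)"
  assumes adm: "admissible q \<kappa> w" and "fst W = 0" and "fst (p + V) + \<sigma> \<in> O_set q \<kappa>"
    and seg: "closed_segment (p + V + (\<sigma>, 0)) (p + V + (\<sigma>, 0) + W) \<subseteq> open_cube"
  shows "w p - w (p + (V + W)) \<le> sqrt 2 * norm V + norm W + 2 * sqrt 2 * \<bar>\<sigma>\<bar>"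
proof -
  define P where "P = p + V + (\<sigma>, 0)"
  \<comment> \<open>Go along \<open>V\<close> at cost at most \<open>\<surd>2\<close>, step horizontally into \<open>O_set\<close>, travel along \<open>W\<close>
      at cost \<open>1\<close> inside it, and step back horizontally.\<close>
  have "w p - w (p + V) \<le> sqrt 2 * norm V"
    using admissible_increment_le_sqrt2[OF adm, of p "p + V"] by (simp add: dist_norm)
  moreover have "w (p + V) - w P \<le> sqrt 2 * \<bar>\<sigma>\<bar>"
    using admissible_increment_le_sqrt2[OF adm, of "p + V" P] by (simp add: P_def dist_norm norm_Pair)
  moreover have "w P - w (P + W) \<le> dist P (P + W)"
    using assms(2,3) seg by (intro admissible_increment_le_in_O_set[OF adm]) (simp_all add: P_def)
  moreover have "w (P + W) - w (p + (V + W)) \<le> sqrt 2 * \<bar>\<sigma>\<bar>"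
    using admissible_increment_le_sqrt2[OF adm, of "P + W" "p + (V + W)"]
    by (simp add: P_def dist_norm norm_Pair algebra_simps)
  ultimately show ?thesis
    by (simp add: dist_norm)
qed

lemma admissible_increment_le_alpha:
  fixes p v :: "real \<times> (real ^ 'm)"
  assumes enum: "bij_betw q {1..} (\<rat> \<inter> {0<..<1})" and "0 < \<kappa>"
    and adm: "admissible q \<kappa> w" and cube: "ball p m \<subseteq> open_cube" and small: "4 * norm v < m"
  shows "w p - w (p + v) \<le> alpha v"
proof (rule field_le_epsilon)
  fix e :: real
  assume "0 < e"
  obtain V W where VW: "v = V + W" "fst W = 0" "sqrt 2 * norm V + norm W = alpha v"
    "norm V \<le> norm v" "norm W \<le> norm v"
    by (rule alpha_split)
  have "norm V < m" "0 < m"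
    using VW(4) small norm_ge_zero[of v] by linarith+
  then have "p + V \<in> open_cube"
    using cube by (auto simp: dist_norm)
  then have "0 < fst (p + V)" "fst (p + V) < 1"
    by (simp_all add: open_cube_def)
  moreover have "0 < min (m / 4) (e / 4)"
    using \<open>0 < m\<close> \<open>0 < e\<close> by simp
  ultimately obtain s where s: "s \<in> O_set q \<kappa>" "\<bar>s - fst (p + V)\<bar> < min (m / 4) (e / 4)"
    by (rule O_set_dense[OF enum \<open>0 < \<kappa>\<close>])
  define \<sigma> where "\<sigma> = s - fst (p + V)"
  define P where "P = p + V + (\<sigma>, 0)"
  have "norm (P - p) \<le> norm V + \<bar>\<sigma>\<bar>"
    using norm_triangle_ineq[of V "(\<sigma>, 0)"] by (simp add: P_def norm_Pair)
  moreover have "norm (P + W - p) \<le> norm (P - p) + norm W"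
    using norm_triangle_ineq[of "P - p" W] by (simp add: algebra_simps)
  moreover have "\<bar>\<sigma>\<bar> < m / 4"
    using s(2) by (simp add: \<sigma>_def)
  ultimately have "norm (P - p) < m" "norm (P + W - p) < m"
    using VW(4,5) small by linarith+
  then have "P \<in> ball p m" "P + W \<in> ball p m"
    by (simp_all add: dist_norm norm_minus_commute)
  then have "closed_segment (p + V + (\<sigma>, 0)) (p + V + (\<sigma>, 0) + W) \<subseteq> open_cube"
    using cube closed_segment_subset[OF _ _ convex_ball] unfolding P_def by blast
  moreover have "fst (p + V) + \<sigma> \<in> O_set q \<kappa>"
    using s(1) by (simp add: \<sigma>_def)
  ultimately have "w p - w (p + (V + W)) \<le> sqrt 2 * norm V + norm W + 2 * sqrt 2 * \<bar>\<sigma>\<bar>"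
    by (intro admissible_increment_le_detour[OF adm VW(2)])
  then have "w p - w (p + v) \<le> alpha v + 2 * sqrt 2 * \<bar>\<sigma>\<bar>"
    using VW(1,3) by simp
  moreover have "sqrt 2 * \<bar>\<sigma>\<bar> \<le> 2 * (e / 4)"
    using s(2) by (intro mult_mono) (auto simp: \<sigma>_def real_le_lsqrt)
  ultimately show "w p - w (p + v) \<le> alpha v + e"
    by linarith
qed

lemma eventually_dist_g_div_le:
  fixes y u :: "real \<times> (real ^ 'm)"
  assumes enum: "bij_betw q {1..} (\<rat> \<inter> {0<..<1})" and "0 < \<kappa>" and "y \<in> open_cube"
  shows "\<forall>\<^sub>F h in at 0. dist_g q \<kappa> y (y + h *\<^sub>R u) / \<bar>h\<bar> \<le> alpha u"
proof -
  obtain m where "0 < m" and cube: "ball y m \<subseteq> open_cube"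
    using open_open_cube assms(3) openE by blast
  define d where "d = m / (4 * (norm u + 1))"
  have "dist_g q \<kappa> y (y + h *\<^sub>R u) / \<bar>h\<bar> \<le> alpha u" if "h \<noteq> 0" "\<bar>h\<bar> < d" for h
  proof -
    have "4 * norm (h *\<^sub>R u) \<le> 4 * (\<bar>h\<bar> * (norm u + 1))"
      by (simp add: mult_left_mono)
    also have "\<dots> < m"
    proof -
      have "0 < 4 * (norm u + 1)"
        by (simp add: add_nonneg_pos)
      then show ?thesis
        using that(2) unfolding d_def by (simp add: pos_less_divide_eq algebra_simps)
    qed
    finally have small: "4 * norm (h *\<^sub>R u) < m" .
    have "dist_g q \<kappa> y (y + h *\<^sub>R u) \<le> \<bar>h\<bar> * alpha u"
    proof (rule dist_g_le)
      fix w :: "real \<times> (real ^ 'm) \<Rightarrow> real"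
      assume "admissible q \<kappa> w"
      from admissible_increment_le_alpha[OF enum \<open>0 < \<kappa>\<close> this cube small]
      show "w y - w (y + h *\<^sub>R u) \<le> \<bar>h\<bar> * alpha u"
        by (simp add: alpha_scaleR)
    qed
    then show ?thesis
      using that(1) by (simp add: pos_divide_le_eq mult.commute)
  qed
  moreover have "0 < d"
    unfolding d_def using \<open>0 < m\<close> by (intro divide_pos_pos) (simp_all add: add_nonneg_pos)
  ultimately show ?thesis
    unfolding eventually_at by (intro exI[of _ d]) auto
qed

section \<open>Lower bound\<close>

lemma negligible_fst_vimage:
  fixes S :: "real set"
  assumes "negligible S"
  shows "negligible {x :: real \<times> 'b::euclidean_space. fst x \<in> S}"
proof -
  obtain S' where S': "S' \<in> null_sets lborel" "S \<subseteq> S'"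
    using assms unfolding negligible_iff_null_sets null_sets_completion_iff2 by blast
  have "S' \<times> (UNIV :: 'b set) \<in> null_sets (lborel \<Otimes>\<^sub>M lborel)"
    by (rule lborel.times_in_null_sets1[OF S'(1)]) simp
  then have "negligible (S' \<times> (UNIV :: 'b set))"
    unfolding negligible_iff_null_sets lborel_prod by (rule null_sets_completionI)
  then show ?thesis
    by (rule negligible_subset) (use S'(2) in auto)
qed

lemma lipschitz_on_test_function:
  fixes F :: "real \<Rightarrow> real" and E :: "'b::real_inner"
  assumes "1-lipschitz_on UNIV F"
  shows "(\<bar>A\<bar> + norm E)-lipschitz_on UNIV (\<lambda>x::real \<times> 'b. A * F (fst x) + inner E (snd x))"
proof (rule lipschitz_onI)
  fix x y :: "real \<times> 'b"
  have "\<bar>A * F (fst x) - A * F (fst y)\<bar> \<le> \<bar>A\<bar> * dist x y"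
  proof -
    have "\<bar>F (fst x) - F (fst y)\<bar> \<le> dist (fst x) (fst y)"
      using lipschitz_onD[OF assms] by (simp add: dist_real_def)
    also have "\<dots> \<le> dist x y"
      by (rule dist_fst_le)
    finally show ?thesis
      by (simp add: abs_mult right_diff_distrib[symmetric] mult_left_mono)
  qed
  moreover have "\<bar>inner E (snd x) - inner E (snd y)\<bar> \<le> norm E * dist x y"
  proof -
    have "\<bar>inner E (snd x - snd y)\<bar> \<le> norm E * norm (snd x - snd y)"
      by (rule Cauchy_Schwarz_ineq2)
    also have "\<dots> \<le> norm E * dist x y"
      using dist_snd_le[of x y] by (intro mult_left_mono) (auto simp: dist_norm)
    finally show ?thesis
      by (simp add: inner_diff_right)
  qed
  ultimately show "dist (A * F (fst x) + inner E (snd x)) (A * F (fst y) + inner E (snd y))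
      \<le> (\<bar>A\<bar> + norm E) * dist x y"
    by (simp add: dist_real_def distrib_right abs_triangle_ineq[THEN order_trans])
qed simp

lemma gradient_le_at_test_function:
  fixes F :: "real \<Rightarrow> real" and E :: "'b::real_inner"
  assumes "(F has_real_derivative D) (at (fst x))"
  shows "gradient_le_at (\<lambda>x::real \<times> 'b. A * F (fst x) + inner E (snd x)) (norm (A * D, E)) x"
proof -
  have "((\<lambda>x::real \<times> 'b. F (fst x)) has_derivative (\<lambda>v. D * fst v)) (at x)"
    using has_derivative_compose[OF has_derivative_fst[OF has_derivative_ident]] assms
    by (simp add: has_field_derivative_def)
  then have "((\<lambda>x::real \<times> 'b. A * F (fst x) + inner E (snd x)) has_derivative (\<lambda>v. inner (A * D, E) v)) (at x)"
    by (auto intro!: derivative_eq_intros simp: inner_prod_def algebra_simps)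
  then show ?thesis
    unfolding gradient_le_at_def differentiable_def
    using has_derivative_unique Cauchy_Schwarz_ineq2 by blast
qed

lemma admissible_test_function:
  fixes E :: "real ^ 'm"
  assumes "norm E \<le> 1" "A\<^sup>2 + (norm E)\<^sup>2 \<le> 2"
  shows "admissible q \<kappa> (\<lambda>x. A * cumulative_measure ({0..1} - O_set q \<kappa>) (fst x) + inner E (snd x))"
    (is "admissible q \<kappa> ?w")
proof -
  let ?F = "cumulative_measure ({0..1} - O_set q \<kappa>)"
  define Bad where "Bad = {t. \<nexists>D. (?F has_real_derivative D) (at t) \<and> (D = 0 \<or> D = 1 \<and> t \<notin> O_set q \<kappa>)}"
  have "negligible {x :: real \<times> (real ^ 'm). fst x \<in> Bad}"
    unfolding Bad_def
    by (intro negligible_fst_vimage negligible_not_has_derivative_cumulative_measure open_O_set)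
  moreover have "gradient_le_at ?w (sqrt (gfac q \<kappa> x)) x" if x: "fst x \<notin> Bad" for x
  proof -
    obtain D where D: "(?F has_real_derivative D) (at (fst x))" "D = 0 \<or> D = 1 \<and> fst x \<notin> O_set q \<kappa>"
      using x by (auto simp: Bad_def)
    from D(2) have "norm (A * D, E) \<le> sqrt (gfac q \<kappa> x)"
    proof
      assume "D = 0"
      then show ?thesis
        using assms(1) gfac_bounds(1)[of q \<kappa> x] by (simp add: norm_Pair real_le_rsqrt order_trans)
    next
      assume "D = 1 \<and> fst x \<notin> O_set q \<kappa>"
      then show ?thesis
        using assms(2) by (simp add: norm_Pair gfac_eq_2)
    qed
    then show ?thesis
      using gradient_le_at_test_function[OF D(1)] by (rule gradient_le_at_mono[rotated])
  qed
  ultimately have "AE x in lebesgue. gradient_le_at ?w (sqrt (gfac q \<kappa> x)) x"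
    by (intro AE_I'[of "{x. fst x \<in> Bad}"]) (auto simp: negligible_iff_null_sets)
  moreover have "(\<bar>A\<bar> + norm E)-lipschitz_on UNIV ?w"
    by (intro lipschitz_on_test_function lipschitz_cumulative_measure fmeasurable_Diff)
      (use open_O_set[of q \<kappa>] in simp_all)
  ultimately show ?thesis
    by (auto simp: admissible_iff_gradient_le)
qed

lemma admissible_increment_ge:
  fixes y v :: "real \<times> (real ^ 'm)" and q :: "nat \<Rightarrow> real" and \<kappa> :: real
  defines "F \<equiv> cumulative_measure ({0..1} - O_set q \<kappa>)"
  obtains w where "admissible q \<kappa> w"
    "alpha v - 2 * \<bar>F (fst y + fst v) - F (fst y) - fst v\<bar> \<le> w y - w (y + v)"
proof -
  obtain A B where AB: "0 \<le> A" "0 \<le> B" "B \<le> 1" "A\<^sup>2 + B\<^sup>2 \<le> 2"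
    "A * \<bar>fst v\<bar> + B * norm (snd v) = alpha v"
    by (rule alpha_dual)
  define \<delta> where "\<delta> = F (fst y + fst v) - F (fst y) - fst v"
  define c where "c = norm (snd v)"
  define A' where "A' = - A * sgn (fst v)"
  define E where "E = (if c = 0 then 0 else (- B / c) *\<^sub>R snd v)"
  define w where "w x = A' * F (fst x) + inner E (snd x)" for x
  \<comment> \<open>\<open>w\<close> is the linear form realising \<open>alpha v\<close> in \<open>alpha_dual\<close>, with the first coordinate
      replaced by \<open>F\<close>, whose slope vanishes on \<open>O_set\<close>; \<open>\<delta>\<close> is the price of this replacement.\<close>
  have nE: "norm E = (if c = 0 then 0 else B)"
    using AB(2) by (simp add: E_def c_def)
  have "admissible q \<kappa> w"
    unfolding w_def F_def
  proof (rule admissible_test_function)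
    show "norm E \<le> 1"
      using AB(3) nE by simp
    have "A'\<^sup>2 \<le> A\<^sup>2"
      by (simp add: A'_def power_mult_distrib sgn_if)
    moreover have "(norm E)\<^sup>2 \<le> B\<^sup>2"
      using nE by simp
    ultimately show "A'\<^sup>2 + (norm E)\<^sup>2 \<le> 2"
      using AB(4) by linarith
  qed
  moreover have "alpha v - 2 * \<bar>\<delta>\<bar> \<le> w y - w (y + v)"
  proof -
    have "A\<^sup>2 \<le> 4"
      using AB(4) zero_le_power2[of B] by linarith
    then have "A \<le> 2"
      using power2_le_imp_le[of A 2] by simp
    have "- inner E (snd v) = B * c"
      by (simp add: E_def c_def power2_norm_eq_inner[symmetric] power2_eq_square)
    moreover have "A * \<bar>fst v\<bar> - 2 * \<bar>\<delta>\<bar> \<le> A * sgn (fst v) * (fst v + \<delta>)"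
    proof -
      have "A * sgn (fst v) * (fst v + \<delta>) = A * \<bar>fst v\<bar> + A * sgn (fst v) * \<delta>"
        by (simp add: abs_sgn[of "fst v"] algebra_simps)
      moreover have "\<bar>A * sgn (fst v) * \<delta>\<bar> \<le> A * \<bar>\<delta>\<bar>"
        using \<open>0 \<le> A\<close> by (auto simp: abs_mult abs_sgn_eq)
      then have "- (A * \<bar>\<delta>\<bar>) \<le> A * sgn (fst v) * \<delta>"
        by (simp add: abs_le_iff)
      moreover have "A * \<bar>\<delta>\<bar> \<le> 2 * \<bar>\<delta>\<bar>"
        using \<open>A \<le> 2\<close> by (simp add: mult_right_mono)
      ultimately show ?thesis
        by linarith
    qed
    ultimately show ?thesis
      using AB(5) by (simp add: w_def A'_def \<delta>_def c_def inner_add_right algebra_simps)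
  qed
  ultimately show thesis
    using that by (simp add: \<delta>_def)
qed

lemma set_integral_theta:
  "(LINT t:{a<..<b}|lborel. \<bar>theta q \<kappa> t - 2\<bar>) = measure lebesgue (O_set q \<kappa> \<inter> {a<..<b})"
proof -
  have "(\<lambda>t. indicator {a<..<b} t *\<^sub>R \<bar>theta q \<kappa> t - 2\<bar>) = indicator (O_set q \<kappa> \<inter> {a<..<b})"
    by (auto simp: fun_eq_iff theta_eq indicator_def)
  moreover have "O_set q \<kappa> \<inter> {a<..<b} \<in> sets lborel"
    using open_O_set[of q \<kappa>] by auto
  ultimately show ?thesis
    by (simp add: set_lebesgue_integral_def)
qed

lemma zero_density_at_O_set:
  assumes dens: "\<forall>\<epsilon>>0. \<exists>\<delta>>0. \<forall>a b. a < t \<and> t < b \<and> b - a < \<delta> \<longrightarrow>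
                 \<bar>(LINT s:{a<..<b}|lborel. \<bar>theta q \<kappa> s - 2\<bar>) / (b - a)\<bar> < \<epsilon>"
  shows "zero_density_at (O_set q \<kappa>) t"
  unfolding zero_density_at_def
proof (intro allI impI)
  fix e :: real
  assume "0 < e"
  with dens obtain \<delta> where "0 < \<delta>" and \<delta>: "\<And>a b. a < t \<Longrightarrow> t < b \<Longrightarrow> b - a < \<delta> \<Longrightarrow>
      \<bar>measure lebesgue (O_set q \<kappa> \<inter> {a<..<b}) / (b - a)\<bar> < e / 4"
    unfolding set_integral_theta by (metis divide_pos_pos zero_less_numeral)
  have "measure lebesgue (O_set q \<kappa> \<inter> cball t r) \<le> e * r" if "0 < r" "r < \<delta> / 4" for r
  proof -
    have "measure lebesgue (O_set q \<kappa> \<inter> cball t r) \<le> measure lebesgue (O_set q \<kappa> \<inter> {t - 2 * r<..<t + 2 * r})"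
      using \<open>0 < r\<close> open_O_set[of q \<kappa>]
      by (intro measure_mono_fmeasurable) (auto simp: dist_real_def fmeasurable_Int_fmeasurable Int_commute[of "O_set q \<kappa>"])
    also have "\<dots> < e / 4 * (4 * r)"
      using \<delta>[of "t - 2 * r" "t + 2 * r"] that by (simp add: pos_divide_less_eq)
    finally show ?thesis
      by simp
  qed
  with \<open>0 < \<delta>\<close> show "\<exists>d>0. \<forall>r. 0 < r \<and> r < d \<longrightarrow> measure lebesgue (O_set q \<kappa> \<inter> cball t r) \<le> e * r"
    by (intro exI[of _ "\<delta> / 4"]) auto
qed

lemma dist_g_div_ge:
  fixes y u :: "real \<times> (real ^ 'm)" and q :: "nat \<Rightarrow> real" and \<kappa> h :: real
  defines "F \<equiv> cumulative_measure ({0..1} - O_set q \<kappa>)"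
  assumes "h \<noteq> 0"
  shows "alpha u - 2 * \<bar>(F (fst y + h * fst u) - F (fst y)) / h - fst u\<bar>
    \<le> dist_g q \<kappa> y (y + h *\<^sub>R u) / \<bar>h\<bar>"
proof -
  obtain w where "admissible q \<kappa> w"
    and w: "alpha (h *\<^sub>R u) - 2 * \<bar>F (fst y + fst (h *\<^sub>R u)) - F (fst y) - fst (h *\<^sub>R u)\<bar>
      \<le> w y - w (y + h *\<^sub>R u)"
    unfolding F_def by (rule admissible_increment_ge)
  have "(F (fst y + h * fst u) - F (fst y)) / h - fst u = (F (fst y + h * fst u) - F (fst y) - h * fst u) / h"
    using \<open>h \<noteq> 0\<close> by (simp add: field_simps)
  then have "\<bar>F (fst y + h * fst u) - F (fst y) - h * fst u\<bar>
      = \<bar>h\<bar> * \<bar>(F (fst y + h * fst u) - F (fst y)) / h - fst u\<bar>"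
    using \<open>h \<noteq> 0\<close> by (simp add: abs_divide)
  moreover have "w y - w (y + h *\<^sub>R u) \<le> dist_g q \<kappa> y (y + h *\<^sub>R u)"
    by (rule dist_g_ge[OF \<open>admissible q \<kappa> w\<close>])
  ultimately have "\<bar>h\<bar> * (alpha u - 2 * \<bar>(F (fst y + h * fst u) - F (fst y)) / h - fst u\<bar>)
      \<le> dist_g q \<kappa> y (y + h *\<^sub>R u)"
    using w by (simp add: alpha_scaleR algebra_simps)
  then show ?thesis
    using \<open>h \<noteq> 0\<close> by (simp add: pos_le_divide_eq mult.commute)
qed

lemma tendsto_difference_quotient_error:
  fixes F :: "real \<Rightarrow> real"
  assumes "(F has_real_derivative 1) (at x)"
  shows "((\<lambda>h. \<bar>(F (x + h * c) - F x) / h - c\<bar>) \<longlongrightarrow> 0) (at 0)"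
proof -
  have "((\<lambda>h. F (x + h * c)) has_real_derivative 1 * c) (at 0)"
    using assms by (intro DERIV_chain2[where f = F]) (auto intro!: derivative_eq_intros)
  then have "((\<lambda>h. (F (x + h * c) - F x) / h) \<longlongrightarrow> c) (at 0)"
    by (simp add: has_field_derivative_iff)
  then show ?thesis
    by (rule tendsto_rabs_zero[OF LIM_zero])
qed

theorem mainTheorem8:
  fixes q :: "nat \<Rightarrow> real" and \<kappa> :: real and y u :: "real \<times> (real ^ 'm)"
  assumes enum: "bij_betw q {1..} (\<rat> \<inter> {0<..<1})"
    and kappa: "0 < \<kappa>" "\<kappa> < 1/8"
    and y_in: "y \<in> open_cube"
    and dens: "\<forall>\<epsilon>>0. \<exists>\<delta>>0. \<forall>a b. a < fst y \<and> fst y < b \<and> b - a < \<delta> \<longrightarrow>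
                 \<bar>(LINT t:{a<..<b}|lborel. \<bar>theta q \<kappa> t - 2\<bar>) / (b - a)\<bar> < \<epsilon>"
  shows "((\<lambda>h. dist_g q \<kappa> y (y + h *\<^sub>R u) / \<bar>h\<bar>) \<longlongrightarrow> alpha u) (at 0)"
proof -
  \<comment> \<open>The bound \<open>\<kappa> < 1/8\<close> only serves to make points \<open>y\<close> as assumed exist.\<close>
  let ?F = "cumulative_measure ({0..1} - O_set q \<kappa>)"
  have "(?F has_real_derivative 1) (at (fst y))"
    using y_in zero_density_at_O_set[OF dens]
    by (intro has_real_derivative_cumulative_measure_interval_1 open_O_set) (auto simp: open_cube_def)
  then have "((\<lambda>h. \<bar>(?F (fst y + h * fst u) - ?F (fst y)) / h - fst u\<bar>) \<longlongrightarrow> 0) (at 0)"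
    by (rule tendsto_difference_quotient_error)
  then have "((\<lambda>h. alpha u - 2 * \<bar>(?F (fst y + h * fst u) - ?F (fst y)) / h - fst u\<bar>)
      \<longlongrightarrow> alpha u - 2 * 0) (at 0)"
    by (intro tendsto_intros)
  then have lim: "((\<lambda>h. alpha u - 2 * \<bar>(?F (fst y + h * fst u) - ?F (fst y)) / h - fst u\<bar>)
      \<longlongrightarrow> alpha u) (at 0)"
    by simp
  have lower: "\<forall>\<^sub>F h in at 0. alpha u - 2 * \<bar>(?F (fst y + h * fst u) - ?F (fst y)) / h - fst u\<bar>
      \<le> dist_g q \<kappa> y (y + h *\<^sub>R u) / \<bar>h\<bar>"
    unfolding eventually_at_filter by (rule always_eventually) (simp add: dist_g_div_ge)
  show ?thesis
    by (rule tendsto_sandwich[OF lower eventually_dist_g_div_le[OF enum kappa(1) y_in] lim tendsto_const])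
qed

end
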